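(* There is a function $C(t,\epsilon)$ such that the following holds for every positive integer $t$ and every $\epsilon\in(0,1)$: let $G$ be a connected balanced bipartite graph with parts $X,Y$ each of order $n$, with $\delta(G)\geq 3C(t,\epsilon)$ and with no induced $S_{t,t}$. Then: (i) writing $U_X(\epsilon)=\{u_1,\dots,u_m\}$, there exist $2m$ distinct vertices $v_1^-,v_1^+,\dots,v_m^-,v_m^+\in Y\setminus U_Y(\epsilon)$ such that $u_iv_i^-$ and $u_iv_i^+$ are edges for all $i$; (ii) writing $U_Y(\epsilon)=\{v_1,\dots,v_m\}$, there exist $2m$ distinct vertices $u_1^-,u_1^+,\dots,u_m^-,u_m^+\in X\setminus U_X(\epsilon)$ such that $v_iu_i^-$ and $v_iu_i^+$ are edges for all $i$.
   Context: For positive integers $a,b$, the biclaw $S_{a,b}$ is the graph with vertex set $\{x,x_1,\dots,x_a,y,y_1,\dots,y_b\}$ and edges $xy$, $xy_1,\dots,xy_b$, $yx_1,\dots,yx_a$; "no induced $S_{t,t}$" means no induced subgraph isomorphic to $S_{t,t}$. For a bipartite graph with parts $X,Y$, $\Delta_X=\max_{x\in X} d(x)$, $\Delta_Y=\max_{y\in Y}d(y)$, $U_X(\epsilon)=\{x\in X: d(x)\leq (1-\epsilon)\Delta_X\}$ and $U_Y(\epsilon)=\{y\in Y: d(y)\leq(1-\epsilon)\Delta_Y\}$. $\delta(G)$ is the minimum degree. *)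

theory Defs
  imports Complex_Main
begin

text \<open>Simple graphs on vertex type nat: finite vertex set V and a symmetric,
  irreflexive adjacency relation E (only its restriction to V matters).\<close>

definition simple_graph :: "nat set \<Rightarrow> (nat \<Rightarrow> nat \<Rightarrow> bool) \<Rightarrow> bool" where
  "simple_graph V E \<longleftrightarrow> finite V \<and> (\<forall>u v. E u v \<longrightarrow> E v u) \<and> (\<forall>v. \<not> E v v)"

definition degree :: "nat set \<Rightarrow> (nat \<Rightarrow> nat \<Rightarrow> bool) \<Rightarrow> nat \<Rightarrow> nat" where
  "degree V E v = card {u \<in> V. E v u}"

definition min_degree :: "nat set \<Rightarrow> (nat \<Rightarrow> nat \<Rightarrow> bool) \<Rightarrow> nat" where
  "min_degree V E = Min (degree V E ` V)"

definition max_degree_in :: "nat set \<Rightarrow> (nat \<Rightarrow> nat \<Rightarrow> bool) \<Rightarrow> nat set \<Rightarrow> nat" where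
  "max_degree_in V E X = Max (degree V E ` X)"

definition connected_graph :: "nat set \<Rightarrow> (nat \<Rightarrow> nat \<Rightarrow> bool) \<Rightarrow> bool" where
  "connected_graph V E \<longleftrightarrow> V \<noteq> {} \<and>
     (\<forall>u\<in>V. \<forall>v\<in>V. (\<lambda>a b. a \<in> V \<and> b \<in> V \<and> E a b)\<^sup>*\<^sup>* u v)"

definition bipartition :: "nat set \<Rightarrow> (nat \<Rightarrow> nat \<Rightarrow> bool) \<Rightarrow> nat set \<Rightarrow> nat set \<Rightarrow> bool" where
  "bipartition V E X Y \<longleftrightarrow> X \<inter> Y = {} \<and> X \<union> Y = V \<and>
     (\<forall>u\<in>X. \<forall>v\<in>X. \<not> E u v) \<and> (\<forall>u\<in>Y. \<forall>v\<in>Y. \<not> E u v)"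

definition low_set :: "nat set \<Rightarrow> (nat \<Rightarrow> nat \<Rightarrow> bool) \<Rightarrow> nat set \<Rightarrow> real \<Rightarrow> nat set" where
  "low_set V E X eps = {x \<in> X. real (degree V E x) \<le> (1 - eps) * real (max_degree_in V E X)}"

datatype bc_vertex = BX | BY | BXi nat | BYi nat

definition biclaw_verts :: "nat \<Rightarrow> nat \<Rightarrow> bc_vertex set" where
  "biclaw_verts a b = {BX, BY} \<union> BXi ` {1..a} \<union> BYi ` {1..b}"

fun biclaw_edge :: "bc_vertex \<Rightarrow> bc_vertex \<Rightarrow> bool" where
  "biclaw_edge BX BY = True"
| "biclaw_edge BY BX = True"
| "biclaw_edge BX (BYi _) = True"
| "biclaw_edge (BYi _) BX = True"
| "biclaw_edge BY (BXi _) = True"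
| "biclaw_edge (BXi _) BY = True"
| "biclaw_edge _ _ = False"

definition has_induced_copy ::
  "nat set \<Rightarrow> (nat \<Rightarrow> nat \<Rightarrow> bool) \<Rightarrow> 'b set \<Rightarrow> ('b \<Rightarrow> 'b \<Rightarrow> bool) \<Rightarrow> bool" where
  "has_induced_copy V E W F \<longleftrightarrow> (\<exists>f. inj_on f W \<and> f ` W \<subseteq> V \<and>
     (\<forall>u\<in>W. \<forall>v\<in>W. E (f u) (f v) \<longleftrightarrow> F u v))"

definition induced_biclaw_free :: "nat set \<Rightarrow> (nat \<Rightarrow> nat \<Rightarrow> bool) \<Rightarrow> nat \<Rightarrow> bool" where
  "induced_biclaw_free V E t \<longleftrightarrow> \<not> has_induced_copy V E (biclaw_verts t t) biclaw_edge"

end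

(* Fix an edge xy with x in X. If t neighbours of y and t neighbours of x spanned no edges
   between them, they would form an induced S_{t,t} together with xy; a Kovari-Sos-Turan count
   therefore shows that at most K(t, eps) neighbours of y miss an eps/8-fraction of N(x) - y.
   Propagating this along paths from a vertex x0 of maximum degree, connectivity gives every
   y in Y a neighbour w whose neighbourhood covers almost all of N(x0), so d(w) >= (1 - eps/2) Delta_X.
   A low neighbour of y misses an eps/2-fraction of N(w), hence y has at most K low neighbours.
   Since the minimum degree is large compared with K, every low vertex keeps many non-low
   neighbours while every vertex is adjacent to at most K low ones, and Hall's theorem applied to
   two copies of each low vertex yields the two disjoint systems of neighbours. *)

theory Submission
  imports Defs
begin

section \<open>Hall's theorem\<close>

definition hall_condition :: "'i set \<Rightarrow> ('i \<Rightarrow> 'b set) \<Rightarrow> bool" where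
  "hall_condition I A \<longleftrightarrow> (\<forall>J\<subseteq>I. card J \<le> card (\<Union>(A ` J)))"

definition distinct_representatives :: "'i set \<Rightarrow> ('i \<Rightarrow> 'b set) \<Rightarrow> bool" where
  "distinct_representatives I A \<longleftrightarrow> (\<exists>f. inj_on f I \<and> (\<forall>i\<in>I. f i \<in> A i))"

lemma hall_condition_finite_nonempty:
  assumes "hall_condition I A" "i \<in> I"
  shows "finite (A i)" "A i \<noteq> {}"
proof -
  have "card {i} \<le> card (\<Union>(A ` {i}))"
    using assms unfolding hall_condition_def by (metis empty_subsetI insert_subset)
  then have "0 < card (A i)" by simp
  then show "finite (A i)" "A i \<noteq> {}" by (simp_all add: card_gt_0_iff)
qed

lemma hall_condition_remove_tight:
  assumes hall: "hall_condition I A" and "finite I" and J: "J \<subseteq> I" "card J = card (\<Union>(A ` J))"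
  shows "hall_condition (I - J) (\<lambda>i. A i - \<Union>(A ` J))"
  unfolding hall_condition_def
proof (intro allI impI)
  fix K assume K: "K \<subseteq> I - J"
  have "K \<union> J \<subseteq> I" using K J by blast
  then have fin: "finite (K \<union> J)" using \<open>finite I\<close> by (rule finite_subset)
  have "finite (\<Union>(A ` (K \<union> J)))"
    using fin hall_condition_finite_nonempty(1)[OF hall] \<open>K \<union> J \<subseteq> I\<close> by auto
  moreover have "\<Union>(A ` J) \<subseteq> \<Union>(A ` (K \<union> J))" by auto
  ultimately have "card (\<Union>(A ` (K \<union> J)) - \<Union>(A ` J)) = card (\<Union>(A ` (K \<union> J))) - card J"
    using J(2) by (simp add: card_Diff_subset finite_subset)
  moreover have "card (K \<union> J) = card K + card J"
    using K fin by (subst card_Un_disjoint) auto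
  moreover have "card (K \<union> J) \<le> card (\<Union>(A ` (K \<union> J)))"
    using hall \<open>K \<union> J \<subseteq> I\<close> unfolding hall_condition_def by blast
  moreover have "\<Union>((\<lambda>i. A i - \<Union>(A ` J)) ` K) = \<Union>(A ` (K \<union> J)) - \<Union>(A ` J)" by auto
  ultimately show "card K \<le> card (\<Union>((\<lambda>i. A i - \<Union>(A ` J)) ` K))" by simp
qed

lemma hall_condition_remove_one:
  assumes hall: "hall_condition I A"
    and slack: "\<And>J. J \<noteq> {} \<Longrightarrow> J \<subset> I \<Longrightarrow> card J \<noteq> card (\<Union>(A ` J))"
    and "i \<in> I"
  shows "hall_condition (I - {i}) (\<lambda>j. A j - {a})"
  unfolding hall_condition_def
proof (intro allI impI)
  fix K assume K: "K \<subseteq> I - {i}"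
  show "card K \<le> card (\<Union>((\<lambda>j. A j - {a}) ` K))"
  proof (cases "K = {}")
    case False
    have "K \<subset> I" using K \<open>i \<in> I\<close> by blast
    then have "card K \<le> card (\<Union>(A ` K))" "card K \<noteq> card (\<Union>(A ` K))"
      using hall slack[OF False] unfolding hall_condition_def by auto
    then have "card K < card (\<Union>(A ` K))" by linarith
    moreover have "\<Union>((\<lambda>j. A j - {a}) ` K) = \<Union>(A ` K) - {a}" by blast
    moreover have "card (\<Union>(A ` K)) - 1 \<le> card (\<Union>(A ` K) - {a})"
      using diff_card_le_card_Diff[of "{a}"] by simp
    ultimately show ?thesis by simp
  qed simp
qed

lemma distinct_representatives_split:
  assumes "J \<subseteq> I" "distinct_representatives J A"
    and "distinct_representatives (I - J) (\<lambda>i. A i - \<Union>(A ` J))"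
  shows "distinct_representatives I A"
proof -
  obtain f g where f: "inj_on f J" "\<forall>i\<in>J. f i \<in> A i"
    and g: "inj_on g (I - J)" "\<forall>i\<in>I - J. g i \<in> A i - \<Union>(A ` J)"
    using assms(2,3) unfolding distinct_representatives_def by blast
  let ?h = "\<lambda>i. if i \<in> J then f i else g i"
  have inj: "inj_on ?h J" "inj_on ?h (I - J)"
    using f(1) g(1) by (simp_all add: inj_on_def)
  have "?h ` J = f ` J" "?h ` (I - J) = g ` (I - J)"
    by (rule image_cong, simp_all)+
  moreover have "f ` J \<subseteq> \<Union>(A ` J)" "g ` (I - J) \<inter> \<Union>(A ` J) = {}" using f(2) g(2) by auto
  ultimately have disj: "?h ` J \<inter> ?h ` (I - J) = {}" by blast
  have parts: "J - (I - J) = J" "(I - J) - J = I - J" "J \<union> (I - J) = I"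
    using \<open>J \<subseteq> I\<close> by auto
  have "inj_on ?h I"
    using inj disj inj_on_Un[of ?h J "I - J"] unfolding parts by blast
  moreover have "\<forall>i\<in>I. ?h i \<in> A i" using f(2) g(2) by simp
  ultimately show ?thesis unfolding distinct_representatives_def by (intro exI[of _ ?h] conjI)
qed

lemma distinct_representatives_remove:
  assumes "i \<in> I" "a \<in> A i" "distinct_representatives (I - {i}) (\<lambda>j. A j - {a})"
  shows "distinct_representatives I A"
proof -
  obtain g where g: "inj_on g (I - {i})" "\<forall>j\<in>I - {i}. g j \<in> A j - {a}"
    using assms(3) unfolding distinct_representatives_def by blast
  have "inj_on (g(i := a)) (insert i (I - {i}))" using g by (auto simp: inj_on_def)
  then have "inj_on (g(i := a)) I" using assms(1) by (simp add: insert_absorb)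
  moreover have "\<forall>j\<in>I. (g(i := a)) j \<in> A j" using g(2) assms(2) by auto
  ultimately show ?thesis unfolding distinct_representatives_def by (intro exI[of _ "g(i := a)"] conjI)
qed

theorem hall_marriage:
  assumes "finite I" "hall_condition I A"
  shows "distinct_representatives I A"
  using assms
proof (induction "card I" arbitrary: I A rule: less_induct)
  case less
  show ?case
  proof (cases "\<exists>J. J \<noteq> {} \<and> J \<subset> I \<and> card J = card (\<Union>(A ` J))")
    case True
    then obtain J where J: "J \<noteq> {}" "J \<subset> I" "card J = card (\<Union>(A ` J))" by blast
    have "finite J" by (rule finite_subset[OF psubset_imp_subset[OF J(2)] less.prems(1)])
    moreover have "card J < card I" by (rule psubset_card_mono[OF less.prems(1) J(2)])
    moreover have "hall_condition J A" using less.prems(2) J(2) unfolding hall_condition_def by blast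
    ultimately have "distinct_representatives J A" by (intro less.hyps)
    have "card (I - J) < card I" using J(1,2) less.prems(1) by (intro psubset_card_mono) auto
    moreover have "hall_condition (I - J) (\<lambda>i. A i - \<Union>(A ` J))"
      using hall_condition_remove_tight[OF less.prems(2,1) _ J(3)] J(2) by blast
    ultimately have "distinct_representatives (I - J) (\<lambda>i. A i - \<Union>(A ` J))"
      using less.prems(1) by (intro less.hyps) auto
    then show ?thesis
      by (rule distinct_representatives_split[OF psubset_imp_subset[OF J(2)] \<open>distinct_representatives J A\<close>])
  next
    case no_tight: False
    show ?thesis
    proof (cases "I = {}")
      case False
      then obtain i where i: "i \<in> I" by blast
      obtain a where a: "a \<in> A i"
        using hall_condition_finite_nonempty(2)[OF less.prems(2) i] by blast
      have "card (I - {i}) < card I" using i less.prems(1) by (rule card_Diff1_less[rotated])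
      moreover have "hall_condition (I - {i}) (\<lambda>j. A j - {a})"
        using hall_condition_remove_one[OF less.prems(2) _ i] no_tight by blast
      ultimately have "distinct_representatives (I - {i}) (\<lambda>j. A j - {a})"
        using less.prems(1) by (intro less.hyps) auto
      then show ?thesis by (rule distinct_representatives_remove[of i I a A, OF i a])
    qed (simp add: distinct_representatives_def)
  qed
qed

lemma two_disjoint_representatives:
  assumes "finite U" and expand: "\<And>S. S \<subseteq> U \<Longrightarrow> 2 * card S \<le> card (\<Union>(A ` S))"
  shows "\<exists>f g. (\<forall>u\<in>U. f u \<in> A u \<and> g u \<in> A u) \<and> inj_on f U \<and> inj_on g U \<and> f ` U \<inter> g ` U = {}"
proof -
  have hall: "hall_condition (U \<times> (UNIV :: bool set)) (A \<circ> fst)"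
    unfolding hall_condition_def
  proof (intro allI impI)
    fix J :: "('a \<times> bool) set" assume J: "J \<subseteq> U \<times> UNIV"
    then have "fst ` J \<subseteq> U" by auto
    then have "finite (fst ` J)" using \<open>finite U\<close> finite_subset by blast
    then have "finite (fst ` J \<times> (UNIV :: bool set))" by simp
    moreover have "J \<subseteq> fst ` J \<times> (UNIV :: bool set)" by (auto intro: rev_image_eqI)
    ultimately have "card J \<le> card (fst ` J \<times> (UNIV :: bool set))" by (rule card_mono)
    also have "\<dots> = 2 * card (fst ` J)" by (simp add: card_cartesian_product)
    also have "\<dots> \<le> card (\<Union>((A \<circ> fst) ` J))"
      using expand[OF \<open>fst ` J \<subseteq> U\<close>] by (simp add: image_comp)
    finally show "card J \<le> card (\<Union>((A \<circ> fst) ` J))" .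
  qed
  have "finite (U \<times> (UNIV :: bool set))" using \<open>finite U\<close> by simp
  from hall_marriage[OF this hall]
  obtain h where h: "inj_on h (U \<times> (UNIV :: bool set))" "\<forall>i\<in>U \<times> UNIV. h i \<in> A (fst i)"
    unfolding distinct_representatives_def by auto
  have h_eq: "u = v \<and> b = c" if "u \<in> U" "v \<in> U" "h (u, b) = h (v, c)" for u v b c
    using inj_onD[OF h(1) that(3)] that(1,2) by simp
  have "inj_on (\<lambda>u. h (u, b)) U" for b by (rule inj_onI) (use h_eq in blast)
  moreover have "(\<lambda>u. h (u, False)) ` U \<inter> (\<lambda>u. h (u, True)) ` U = {}"
    using h_eq by blast
  moreover have "\<forall>u\<in>U. h (u, False) \<in> A u \<and> h (u, True) \<in> A u" using h(2) by simp
  ultimately show ?thesis by (intro exI[of _ "\<lambda>u. h (u, False)"] exI[of _ "\<lambda>u. h (u, True)"]) simp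
qed

section \<open>Counting in graphs without a t by t hole\<close>

lemma sum_card_filter_swap:
  assumes "finite A" "finite B"
  shows "(\<Sum>a\<in>A. card {b\<in>B. P a b}) = (\<Sum>b\<in>B. card {a\<in>A. P a b})"
proof -
  have card_eq: "card {x\<in>C. Q x} = (\<Sum>x\<in>C. of_bool (Q x))" if "finite C" for C and Q :: "'c \<Rightarrow> bool"
    using that by (simp add: Int_def)
  have "(\<Sum>a\<in>A. card {b\<in>B. P a b}) = (\<Sum>a\<in>A. \<Sum>b\<in>B. of_bool (P a b))"
    using assms(2) by (simp add: card_eq)
  also have "\<dots> = (\<Sum>b\<in>B. \<Sum>a\<in>A. of_bool (P a b))"
    by (rule sum.swap)
  also have "\<dots> = (\<Sum>b\<in>B. card {a\<in>A. P a b})"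
    using assms(1) by (simp add: card_eq)
  finally show ?thesis .
qed

text \<open>The Kovari-Sos-Turan double count.\<close>
lemma sum_choose_non_neighbours_le:
  assumes "finite A" "finite B"
    and no_hole: "\<And>A' B'. A' \<subseteq> A \<Longrightarrow> B' \<subseteq> B \<Longrightarrow> card A' = t \<Longrightarrow> card B' = t \<Longrightarrow> \<exists>a\<in>A'. \<exists>b\<in>B'. E a b"
  shows "(\<Sum>a\<in>A. card {b\<in>B. \<not> E a b} choose t) \<le> (t - 1) * (card B choose t)"
proof -
  define Ts where "Ts = {T. T \<subseteq> B \<and> card T = t}"
  have "finite Ts" unfolding Ts_def using \<open>finite B\<close> by simp
  have choose_eq: "card {b\<in>B. \<not> E a b} choose t = card {T\<in>Ts. \<forall>b\<in>T. \<not> E a b}" for a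
  proof -
    have "{T\<in>Ts. \<forall>b\<in>T. \<not> E a b} = {T. T \<subseteq> {b\<in>B. \<not> E a b} \<and> card T = t}"
      unfolding Ts_def by auto
    then show ?thesis using n_subsets[of "{b\<in>B. \<not> E a b}" t] \<open>finite B\<close> by simp
  qed
  have few_common: "card {a\<in>A. \<forall>b\<in>T. \<not> E a b} \<le> t - 1" if "T \<in> Ts" for T
  proof (rule ccontr)
    assume "\<not> ?thesis"
    then have "t \<le> card {a\<in>A. \<forall>b\<in>T. \<not> E a b}" by simp
    then obtain A' where A': "A' \<subseteq> {a\<in>A. \<forall>b\<in>T. \<not> E a b}" "card A' = t" "finite A'"
      by (rule obtain_subset_with_card_n)
    moreover have "T \<subseteq> B" "card T = t" using that unfolding Ts_def by auto
    ultimately show False using no_hole[of A' T] by blast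
  qed
  have "(\<Sum>a\<in>A. card {b\<in>B. \<not> E a b} choose t) = (\<Sum>a\<in>A. card {T\<in>Ts. \<forall>b\<in>T. \<not> E a b})"
    by (simp only: choose_eq)
  also have "\<dots> = (\<Sum>T\<in>Ts. card {a\<in>A. \<forall>b\<in>T. \<not> E a b})"
    by (rule sum_card_filter_swap[OF \<open>finite A\<close> \<open>finite Ts\<close>])
  also have "\<dots> \<le> (\<Sum>T\<in>Ts. t - 1)"
    using few_common by (rule sum_mono)
  also have "\<dots> = (t - 1) * (card B choose t)"
    unfolding Ts_def using n_subsets[OF \<open>finite B\<close>] by simp
  finally show ?thesis .
qed

lemma card_many_non_neighbours_le:
  fixes \<mu> :: real
  assumes "finite A" "finite B" "t \<ge> 1"
    and no_hole: "\<And>A' B'. A' \<subseteq> A \<Longrightarrow> B' \<subseteq> B \<Longrightarrow> card A' = t \<Longrightarrow> card B' = t \<Longrightarrow> \<exists>a\<in>A'. \<exists>b\<in>B'. E a b"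
    and "\<mu> > 0" "real t \<le> \<mu> * card B"
    and many: "\<And>a. a \<in> A \<Longrightarrow> \<mu> * card B \<le> card {b\<in>B. \<not> E a b}"
  shows "card A \<le> real (t - 1) * (t / \<mu>) ^ t"
proof (cases "A = {}")
  case False
  define N where "N = card B"
  have "N > 0" using assms(3,6) unfolding N_def by (cases "card B") auto
  have many_choose: "(\<mu> * N / t) ^ t \<le> card {b\<in>B. \<not> E a b} choose t" if "a \<in> A" for a
  proof -
    have "real t \<le> card {b\<in>B. \<not> E a b}" using many[OF that] assms(6) unfolding N_def by linarith
    then have "(card {b\<in>B. \<not> E a b} / t) ^ t \<le> real (card {b\<in>B. \<not> E a b} choose t)"
      by (intro binomial_ge_n_over_k_pow_k) simp
    moreover have "(\<mu> * N / t) ^ t \<le> (card {b\<in>B. \<not> E a b} / t) ^ t"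
      using many[OF that] assms(3,5) unfolding N_def by (intro power_mono divide_right_mono) auto
    ultimately show ?thesis by linarith
  qed
  have "t \<le> N"
  proof -
    obtain a where "a \<in> A" using False by blast
    have "card {b\<in>B. \<not> E a b} \<le> N" unfolding N_def using \<open>finite B\<close> by (intro card_mono) auto
    then show ?thesis using many[OF \<open>a \<in> A\<close>] assms(6) unfolding N_def by linarith
  qed
  have "card A * (\<mu> * N / t) ^ t \<le> (\<Sum>a\<in>A. real (card {b\<in>B. \<not> E a b} choose t))"
    using sum_mono[OF many_choose] by simp
  also have "\<dots> \<le> (t - 1) * (N choose t)"
    using sum_choose_non_neighbours_le[OF assms(1,2) no_hole] unfolding N_def of_nat_sum[symmetric] of_nat_le_iff
    by blast
  also have "\<dots> \<le> (t - 1) * N ^ t"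
    using binomial_le_pow[OF \<open>t \<le> N\<close>] by (simp add: mult_left_mono flip: of_nat_power)
  finally have "card A * (\<mu> / t) ^ t * N ^ t \<le> (t - 1) * N ^ t"
    by (simp add: power_mult_distrib power_divide mult_ac)
  then have "card A * (\<mu> / t) ^ t \<le> t - 1" using \<open>N > 0\<close> by simp
  moreover have "(\<mu> / t) ^ t > 0" using assms(3,5) by simp
  ultimately have "card A \<le> (t - 1) / (\<mu> / t) ^ t" by (simp add: pos_le_divide_eq)
  also have "\<dots> = (t - 1) * (t / \<mu>) ^ t" by (simp add: power_divide)
  finally show ?thesis .
qed (use \<open>\<mu> > 0\<close> in simp)

section \<open>Biclaw-free bipartite graphs of large minimum degree\<close>

lemma mem_biclaw_verts [simp]:
  "BX \<in> biclaw_verts a b" "BY \<in> biclaw_verts a b"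
  "BXi i \<in> biclaw_verts a b \<longleftrightarrow> i \<in> {1..a}" "BYi j \<in> biclaw_verts a b \<longleftrightarrow> j \<in> {1..b}"
  by (auto simp: biclaw_verts_def)

lemma has_induced_biclaw_if_hole:
  assumes G: "simple_graph V E" and xy: "x \<in> V" "y \<in> V" "E x y"
    and A: "A \<subseteq> V" "card A = t" "\<forall>a\<in>A. E y a \<and> \<not> E x a" "x \<notin> A"
    and B: "B \<subseteq> V" "card B = t" "\<forall>b\<in>B. E x b \<and> \<not> E y b" "y \<notin> B"
    and indep: "\<forall>u\<in>A \<union> B. \<forall>v\<in>A \<union> B. \<not> E u v"
  shows "has_induced_copy V E (biclaw_verts t t) biclaw_edge"
proof -
  have sym: "\<And>u v. E u v \<Longrightarrow> E v u" and irrefl: "\<And>v. \<not> E v v" and "finite V"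
    using G unfolding simple_graph_def by auto
  have "finite A" "finite B" using A(1) B(1) \<open>finite V\<close> finite_subset by blast+
  then obtain ha hb where ha: "bij_betw ha {1..t} A" and hb: "bij_betw hb {1..t} B"
    using ex_bij_betw_nat_finite_1 A(2) B(2) by metis
  have ha_in: "ha i \<in> A" and hb_in: "hb i \<in> B" if "i \<in> {1..t}" for i
    using ha hb that by (auto dest: bij_betwE)
  have ha_inj: "inj_on ha {1..t}" and hb_inj: "inj_on hb {1..t}"
    using ha hb by (auto dest: bij_betw_imp_inj_on)
  have distinct: "x \<noteq> y" "y \<notin> A" "x \<notin> B" "\<forall>a\<in>A. a \<notin> B"
    using xy(3) A(3) B(3) irrefl by auto
  have cross: "ha i \<noteq> hb j" "hb j \<noteq> ha i" if "i \<in> {1..t}" "j \<in> {1..t}" for i j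
    using ha_in[OF that(1)] hb_in[OF that(2)] distinct(4) by auto
  have xy_adj: "E x y" "E y x" using xy(3) sym by blast+
  have A_adj: "E y a" "E a y" "\<not> E x a" "\<not> E a x" if "a \<in> A" for a
    using A(3) sym that by blast+
  have B_adj: "E x b" "E b x" "\<not> E y b" "\<not> E b y" if "b \<in> B" for b
    using B(3) sym that by blast+
  define f where "f = case_bc_vertex x y ha hb"
  have "inj_on f (biclaw_verts t t)"
  proof (rule inj_onI)
    fix u v assume "u \<in> biclaw_verts t t" "v \<in> biclaw_verts t t" "f u = f v"
    then show "u = v"
      using distinct A(4) B(4) ha_in hb_in cross
      by (cases u; cases v) (auto simp: f_def dest: inj_onD[OF ha_inj] inj_onD[OF hb_inj])
  qed
  moreover have "f ` biclaw_verts t t \<subseteq> V"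
    using xy A(1) B(1) ha_in hb_in by (auto simp: f_def biclaw_verts_def)
  moreover have "E (f u) (f v) \<longleftrightarrow> biclaw_edge u v"
    if "u \<in> biclaw_verts t t" "v \<in> biclaw_verts t t" for u v
    using that xy_adj A_adj B_adj indep ha_in hb_in irrefl
    by (cases u; cases v) (auto simp: f_def)
  ultimately show ?thesis unfolding has_induced_copy_def by blast
qed

lemma card_Diff_ge:
  assumes "finite B"
  shows "real (card A) - real (card B) \<le> real (card (A - B))"
  using diff_card_le_card_Diff[OF assms, of A] by linarith

lemma real_card_Diff_singleton:
  assumes "finite A" "a \<in> A"
  shows "real (card (A - {a})) = real (card A) - 1"
proof -
  have "card A > 0" using assms card_gt_0_iff by blast
  then show ?thesis using assms by (simp add: of_nat_diff)
qed

lemma nonempty_if_card_gt: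
  fixes r :: real
  assumes "r < real (card S)" "0 \<le> r"
  shows "S \<noteq> {}"
  using assms by auto

lemma card_le_card_Un:
  assumes "finite B" "finite C" "A \<subseteq> B \<union> C"
  shows "card A \<le> card B + card C"
  using card_mono[OF _ assms(3)] card_Un_le[of B C] assms(1,2) by simp

definition neighbours :: "nat set \<Rightarrow> (nat \<Rightarrow> nat \<Rightarrow> bool) \<Rightarrow> nat \<Rightarrow> nat set" where
  "neighbours V E v = {u \<in> V. E v u}"

text \<open>The bound of card_many_non_neighbours_le for mu = eps / 8.\<close>
definition bad_neighbour_bound :: "nat \<Rightarrow> real \<Rightarrow> real" where
  "bad_neighbour_bound t eps = real (t - 1) * (8 * real t / eps) ^ t"

locale biclaw_free_bipartite =
  fixes V :: "nat set" and E :: "nat \<Rightarrow> nat \<Rightarrow> bool" and X Y :: "nat set"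
    and t :: nat and eps :: real
  assumes simple: "simple_graph V E" and bipartite: "bipartition V E X Y"
    and connected: "connected_graph V E" and biclaw_free: "induced_biclaw_free V E t"
    and t_pos: "1 \<le> t" and eps: "0 < eps" "eps < 1"
    and min_degree_large: "64 * (real t + bad_neighbour_bound t eps + 2) \<le> eps * real (min_degree V E)"
begin

abbreviation N where "N \<equiv> neighbours V E"
abbreviation K where "K \<equiv> bad_neighbour_bound t eps"

lemma swap: "biclaw_free_bipartite V E Y X t eps"
  using simple bipartite connected biclaw_free t_pos eps min_degree_large
  unfolding biclaw_free_bipartite_def bipartition_def by auto

lemma finite_V: "finite V" and E_sym: "E u v \<Longrightarrow> E v u"
  using simple unfolding simple_graph_def by auto

lemma X_subset: "X \<subseteq> V" and Y_subset: "Y \<subseteq> V" and X_Y_disjoint: "X \<inter> Y = {}"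
  and X_union_Y: "X \<union> Y = V"
  and no_edge_X: "u \<in> X \<Longrightarrow> v \<in> X \<Longrightarrow> \<not> E u v" and no_edge_Y: "u \<in> Y \<Longrightarrow> v \<in> Y \<Longrightarrow> \<not> E u v"
  using bipartite unfolding bipartition_def by auto

lemma finite_N: "finite (N v)" and N_subset: "N v \<subseteq> V" and mem_N: "u \<in> N v \<longleftrightarrow> u \<in> V \<and> E v u"
  using finite_V unfolding neighbours_def by auto

lemma N_X: "x \<in> X \<Longrightarrow> N x \<subseteq> Y" and N_Y: "y \<in> Y \<Longrightarrow> N y \<subseteq> X"
  using no_edge_X no_edge_Y X_union_Y unfolding neighbours_def by auto

lemma N_sym: "v \<in> V \<Longrightarrow> u \<in> N v \<Longrightarrow> v \<in> N u"
  using E_sym unfolding neighbours_def by auto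

lemma degree_eq_card_N: "degree V E v = card (N v)"
  unfolding degree_def neighbours_def ..

lemma K_nonneg: "K \<ge> 0"
  unfolding bad_neighbour_bound_def using eps by simp

lemma real_t_ge_1: "1 \<le> real t"
  using t_pos by simp

lemma card_N_large:
  assumes "v \<in> V"
  shows "64 * (real t + K + 2) \<le> eps * card (N v)" "64 * (real t + K + 2) \<le> card (N v)"
proof -
  have "min_degree V E \<le> card (N v)"
    unfolding min_degree_def degree_eq_card_N[symmetric] using finite_V assms by simp
  then have "eps * min_degree V E \<le> eps * card (N v)" using eps by simp
  then show "64 * (real t + K + 2) \<le> eps * card (N v)" using min_degree_large by linarith
  also have "\<dots> \<le> card (N v)" using eps by (simp add: mult_left_le_one_le)
  finally show "64 * (real t + K + 2) \<le> card (N v)" .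
qed

lemma sum_card_N_Int_swap:
  assumes "A \<subseteq> V" "B \<subseteq> V" "finite A" "finite B"
  shows "(\<Sum>a\<in>A. card (N a \<inter> B)) = (\<Sum>b\<in>B. card (N b \<inter> A))"
proof -
  have "N a \<inter> B = {b\<in>B. E a b}" if "a \<in> A" for a using assms(2) by (auto simp: mem_N)
  moreover have "N b \<inter> A = {a\<in>A. E a b}" if "b \<in> B" for b using assms(1) E_sym by (auto simp: mem_N)
  ultimately show ?thesis using sum_card_filter_swap[OF assms(3,4), of E] by simp
qed

lemma no_hole:
  assumes "x \<in> X" "y \<in> Y" "E x y" and A: "A \<subseteq> N y - {x}" "t \<le> card A"
    and B: "B \<subseteq> N x - {y}" "t \<le> card B"
  shows "\<exists>a\<in>A. \<exists>b\<in>B. E a b"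
proof (rule ccontr)
  assume no_edge: "\<not> ?thesis"
  obtain A0 where A0: "A0 \<subseteq> A" "card A0 = t" using obtain_subset_with_card_n[OF A(2)] by blast
  obtain B0 where B0: "B0 \<subseteq> B" "card B0 = t" using obtain_subset_with_card_n[OF B(2)] by blast
  have "A0 \<subseteq> X" "B0 \<subseteq> Y" using A0(1) A(1) B0(1) B(1) N_X[OF \<open>x \<in> X\<close>] N_Y[OF \<open>y \<in> Y\<close>] by auto
  have "has_induced_copy V E (biclaw_verts t t) biclaw_edge"
  proof (rule has_induced_biclaw_if_hole[OF simple])
    show "x \<in> V" "y \<in> V" "E x y" using assms(1-3) X_subset Y_subset by auto
    show "A0 \<subseteq> V" "B0 \<subseteq> V" "card A0 = t" "card B0 = t"
      using \<open>A0 \<subseteq> X\<close> \<open>B0 \<subseteq> Y\<close> X_subset Y_subset A0 B0 by auto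
    show "\<forall>a\<in>A0. E y a \<and> \<not> E x a" "x \<notin> A0"
      using A0(1) A(1) \<open>A0 \<subseteq> X\<close> no_edge_X[OF \<open>x \<in> X\<close>] by (auto simp: mem_N)
    show "\<forall>b\<in>B0. E x b \<and> \<not> E y b" "y \<notin> B0"
      using B0(1) B(1) \<open>B0 \<subseteq> Y\<close> no_edge_Y[OF \<open>y \<in> Y\<close>] by (auto simp: mem_N)
    have cross: "\<not> E a b" if "a \<in> A" "b \<in> B" for a b
      using no_edge that by blast
    show "\<forall>u\<in>A0 \<union> B0. \<forall>v\<in>A0 \<union> B0. \<not> E u v"
    proof (intro ballI)
      fix u v assume "u \<in> A0 \<union> B0" "v \<in> A0 \<union> B0"
      then consider "u \<in> X" "v \<in> X" | "u \<in> A" "v \<in> B" | "u \<in> B" "v \<in> A" | "u \<in> Y" "v \<in> Y"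
        using A0(1) B0(1) \<open>A0 \<subseteq> X\<close> \<open>B0 \<subseteq> Y\<close> by blast
      then show "\<not> E u v"
        by cases (use no_edge_X no_edge_Y cross E_sym in blast)+
    qed
  qed
  with biclaw_free show False unfolding induced_biclaw_free_def by simp
qed

definition almost_covers :: "nat \<Rightarrow> nat \<Rightarrow> nat \<Rightarrow> bool" where
  "almost_covers a x y \<longleftrightarrow> real (card (N x - {y} - N a)) < eps / 8 * real (card (N x - {y}))"

lemma card_not_almost_covers_le:
  assumes "x \<in> X" "y \<in> Y" "E x y"
  shows "real (card {a \<in> N y - {x}. \<not> almost_covers a x y}) \<le> K"
proof -
  let ?S = "{a \<in> N y - {x}. \<not> almost_covers a x y}" and ?B = "N x - {y}"
  have "y \<in> N x" using assms Y_subset by (auto simp: mem_N)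
  then have card_B: "real (card ?B) = real (card (N x)) - 1" by (rule real_card_Diff_singleton[OF finite_N])
  have "x \<in> V" using assms(1) X_subset by blast
  then have "real t \<le> eps / 8 * real (card ?B)"
    using card_N_large[of x] K_nonneg eps unfolding card_B by (simp add: algebra_simps)
  have "real (card ?S) \<le> real (t - 1) * (real t / (eps / 8)) ^ t"
  proof (rule card_many_non_neighbours_le)
    show "finite ?S" "finite ?B" using finite_N by auto
    show "1 \<le> t" "0 < eps / 8" using t_pos eps by auto
    show "real t \<le> eps / 8 * real (card ?B)" by fact
    show "eps / 8 * real (card ?B) \<le> real (card {b \<in> ?B. \<not> E a b})" if "a \<in> ?S" for a
    proof -
      have "{b \<in> ?B. \<not> E a b} = ?B - N a" using N_subset by (auto simp: mem_N)
      then show ?thesis using that unfolding almost_covers_def by simp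
    qed
    show "\<exists>a\<in>A'. \<exists>b\<in>B'. E a b" if "A' \<subseteq> ?S" "B' \<subseteq> ?B" "card A' = t" "card B' = t" for A' B'
      using no_hole[OF assms, of A' B'] that by auto
  qed
  also have "\<dots> = K" unfolding bad_neighbour_bound_def by (simp add: field_simps)
  finally show ?thesis .
qed

lemma card_almost_covers_ge:
  assumes "x \<in> X" "y \<in> Y" "E x y" "P \<subseteq> N y - {x}"
  shows "real (card P) - K \<le> real (card {a \<in> P. almost_covers a x y})"
proof -
  have "{a \<in> P. almost_covers a x y} = P - {a \<in> N y - {x}. \<not> almost_covers a x y}"
    using assms(4) by blast
  then show ?thesis
    using card_Diff_ge[of "{a \<in> N y - {x}. \<not> almost_covers a x y}" P]
      card_not_almost_covers_le[OF assms(1-3)] finite_N by simp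
qed

lemma card_N_le_max_degree: "x \<in> X \<Longrightarrow> card (N x) \<le> max_degree_in V E X"
  unfolding max_degree_in_def degree_eq_card_N[symmetric]
  using finite_subset[OF X_subset finite_V] by simp

lemma almost_covers_Int_gt:
  assumes "x \<in> X" "almost_covers a x y"
  shows "real (card (N x \<inter> S)) - 1 - eps / 8 * max_degree_in V E X < real (card (N a \<inter> S))"
proof -
  have "card (N x \<inter> S) \<le> card (insert y ((N x - {y} - N a) \<union> (N a \<inter> S)))"
    using finite_N by (intro card_mono) auto
  also have "\<dots> \<le> Suc (card ((N x - {y} - N a) \<union> (N a \<inter> S)))"
    using finite_N by (simp add: card_insert_if)
  also have "\<dots> \<le> Suc (card (N x - {y} - N a) + card (N a \<inter> S))"
    using card_Un_le by simp
  finally have "real (card (N x \<inter> S)) \<le> 1 + real (card (N x - {y} - N a)) + real (card (N a \<inter> S))"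
    by linarith
  moreover have "card (N x - {y}) \<le> max_degree_in V E X"
    using card_N_le_max_degree[OF assms(1)] card_mono[OF finite_N, of "N x - {y}"] by force
  then have "eps / 8 * card (N x - {y}) \<le> eps / 8 * max_degree_in V E X"
    using eps by (intro mult_left_mono) auto
  ultimately show ?thesis using assms(2) unfolding almost_covers_def by linarith
qed

lemma card_common_neighbours_gt:
  assumes "x \<in> X" "z \<in> N x" "q \<in> N x" "almost_covers a x z" "almost_covers w x q"
  shows "real (card (N x - {z})) / 2 < real (card (N a \<inter> (N x \<inter> N w - {z})))"
proof -
  define \<beta> where "\<beta> = real (card (N x - {z}))"
  have \<beta>_eq: "\<beta> = real (card (N x)) - 1" "real (card (N x - {q})) = real (card (N x)) - 1"
    unfolding \<beta>_def using real_card_Diff_singleton[OF finite_N] assms(2,3) by auto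
  moreover have "64 * (real t + K + 2) \<le> real (card (N x))"
    using card_N_large(2) assms(1) X_subset by blast
  ultimately have "\<beta> > 4" using K_nonneg real_t_ge_1 by argo
  have "card (N x - {z} - N w) \<le> card (insert q (N x - {q} - N w))"
    using finite_N by (intro card_mono) auto
  also have "\<dots> \<le> Suc (card (N x - {q} - N w))"
    using finite_N by (simp add: card_insert_if)
  finally have miss_w: "card (N x - {z} - N w) \<le> Suc (card (N x - {q} - N w))" .
  have "card (N x - {z}) \<le> card ((N a \<inter> (N x \<inter> N w - {z})) \<union> (N x - {z} - N a) \<union> (N x - {z} - N w))"
    using finite_N by (intro card_mono) auto
  also have "\<dots> \<le> card (N a \<inter> (N x \<inter> N w - {z})) + card (N x - {z} - N a) + card (N x - {z} - N w)"
    by (meson add_right_mono card_Un_le order_trans)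
  finally have "\<beta> \<le> real (card (N a \<inter> (N x \<inter> N w - {z}))) + real (card (N x - {z} - N a)) + 1
      + real (card (N x - {q} - N w))"
    unfolding \<beta>_def using miss_w by linarith
  moreover have "real (card (N x - {z} - N a)) < eps / 8 * \<beta>"
    using assms(4) unfolding almost_covers_def \<beta>_def .
  moreover have "real (card (N x - {q} - N w)) < eps / 8 * \<beta>"
    using assms(5) \<beta>_eq unfolding almost_covers_def by simp
  moreover have "eps / 8 * \<beta> \<le> 1 / 8 * \<beta>" using eps \<open>\<beta> > 4\<close> by (intro mult_right_mono) auto
  ultimately show ?thesis using \<open>\<beta> > 4\<close> unfolding \<beta>_def by linarith
qed

lemma exists_neighbour_seeing_half:
  assumes "x \<in> X" "z \<in> N x" "q \<in> N x" "A \<subseteq> V" "A \<noteq> {}"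
    and A_covers: "\<And>a. a \<in> A \<Longrightarrow> almost_covers a x z" and w_covers: "almost_covers w x q"
  shows "\<exists>b \<in> N x \<inter> N w - {z}. real (card A) / 2 \<le> real (card (N b \<inter> A))"
proof (rule ccontr)
  assume no_b: "\<not> ?thesis"
  define B where "B = N x \<inter> N w - {z}"
  have "finite A" "finite B" using assms(4) finite_subset[OF _ finite_V] finite_N unfolding B_def by auto
  have "B \<subseteq> V" using N_subset unfolding B_def by blast
  have "real (card A) * (real (card (N x - {z})) / 2) = (\<Sum>a\<in>A. real (card (N x - {z})) / 2)"
    by simp
  also have "\<dots> < (\<Sum>a\<in>A. real (card (N a \<inter> B)))"
    using card_common_neighbours_gt[OF assms(1-3) A_covers w_covers] unfolding B_def
    by (intro sum_strict_mono[OF \<open>finite A\<close> \<open>A \<noteq> {}\<close>]) auto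
  also have "\<dots> = (\<Sum>b\<in>B. real (card (N b \<inter> A)))"
    using sum_card_N_Int_swap[OF assms(4) \<open>B \<subseteq> V\<close> \<open>finite A\<close> \<open>finite B\<close>]
    by (metis (mono_tags, lifting) of_nat_sum sum.cong)
  also have "\<dots> \<le> real (card B) * (real (card A) / 2)"
    using no_b unfolding B_def by (intro sum_bounded_above) (auto simp: not_le less_imp_le)
  also have "\<dots> \<le> real (card (N x - {z})) * (real (card A) / 2)"
    unfolding B_def using card_mono[OF finite_Diff[OF finite_N], of "N x \<inter> N w - {z}" x "{z}"]
    by (intro mult_right_mono) auto
  finally show False by (simp add: mult.commute)
qed

lemma card_almost_covers_Diff_ge:
  assumes "x \<in> X" "y \<in> Y" "E x y" "P \<subseteq> N y"
  shows "real (card P) - 1 - K \<le> real (card {a \<in> P - {x}. almost_covers a x y})"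
proof -
  have "real (card (P - {x})) - K \<le> real (card {a \<in> P - {x}. almost_covers a x y})"
    by (rule card_almost_covers_ge[OF assms(1-3)]) (use assms(4) in blast)
  moreover have "real (card P) - 1 \<le> real (card (P - {x}))" using card_Diff_ge[of "{x}" P] by simp
  ultimately show ?thesis by linarith
qed

lemma exists_almost_covers_both:
  assumes "x \<in> X" "x' \<in> X" "r \<in> Y" "E x r" "E x' r"
  shows "\<exists>w\<in>N r. almost_covers w x r \<and> almost_covers w x' r"
proof -
  let ?P = "{a \<in> N r - {x}. almost_covers a x r}"
  let ?Q = "{a \<in> ?P - {x'}. almost_covers a x' r}"
  have "real (card (N r)) - 1 - K \<le> real (card ?P)"
    using card_almost_covers_Diff_ge[OF assms(1,3,4)] by simp
  moreover have "real (card ?P) - 1 - K \<le> real (card ?Q)"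
    by (rule card_almost_covers_Diff_ge[OF assms(2,3,5)]) blast
  moreover have "64 * (real t + K + 2) \<le> real (card (N r))"
    using card_N_large(2) assms(3) Y_subset by blast
  ultimately have "0 < real (card ?Q)" using K_nonneg real_t_ge_1 by argo
  then have "?Q \<noteq> {}" by (simp add: card_gt_0_iff)
  then obtain w where "w \<in> ?Q" by blast
  then show ?thesis by blast
qed

lemma card_N_Diff_ge:
  assumes "y \<in> N w" "y \<in> N u"
  shows "real (card (N w)) - real (card (N u)) \<le> real (card (N w - {y} - N u))"
proof -
  have "card (N w - {y}) \<le> card (N w - {y} - N u) + card (N u - {y})"
    using finite_N by (intro card_le_card_Un) auto
  then show ?thesis using real_card_Diff_singleton[OF finite_N] assms by fastforce
qed

lemma X_nonempty: "X \<noteq> {}"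
proof -
  obtain v where "v \<in> V" using connected unfolding connected_graph_def by blast
  moreover have "N v \<noteq> {}"
    using card_N_large(2)[OF \<open>v \<in> V\<close>] K_nonneg by (auto simp del: of_nat_le_iff)
  ultimately show ?thesis using N_Y X_union_Y by blast
qed

end

locale biclaw_free_bipartite_max = biclaw_free_bipartite +
  fixes x0 :: nat
  assumes x0: "x0 \<in> X" "card (N x0) = max_degree_in V E X"
begin

abbreviation \<Delta> where "\<Delta> \<equiv> real (max_degree_in V E X)"

definition rich :: "nat \<Rightarrow> bool" where
  "rich w \<longleftrightarrow> (1 - eps / 2) * \<Delta> \<le> real (card (N w \<inter> N x0))"

definition Y_near :: "nat set" where
  "Y_near = {p \<in> Y. \<exists>x\<in>N p. N x \<inter> N x0 \<noteq> {}}"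

lemma \<Delta>_large: "64 * (real t + K + 2) \<le> eps * \<Delta>"
  using card_N_large(1)[of x0] x0 X_subset by auto

lemma rich_card_Int_ge:
  assumes "rich w"
  shows "real t + 1 \<le> real (card (N w \<inter> N x0))"
proof -
  have "(1 - eps / 2) * \<Delta> = \<Delta> - eps * \<Delta> / 2" by (simp add: algebra_simps)
  moreover have "eps * \<Delta> \<le> \<Delta>" using eps by (intro mult_left_le_one_le) auto
  ultimately show ?thesis using assms \<Delta>_large K_nonneg real_t_ge_1 unfolding rich_def by argo
qed

lemma rich_if_almost_covers_twice:
  assumes "w \<in> X" "almost_covers w x0 r" "almost_covers a w b"
  shows "rich a"
proof -
  have "\<Delta> - 1 - eps / 8 * \<Delta> < real (card (N w \<inter> N x0))"
    using almost_covers_Int_gt[OF x0(1) assms(2), of "N x0"] x0(2) by simp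
  moreover have "real (card (N w \<inter> N x0)) - 1 - eps / 8 * \<Delta> < real (card (N a \<inter> N x0))"
    by (rule almost_covers_Int_gt[OF assms(1,3)])
  moreover have "128 \<le> eps * \<Delta>" using \<Delta>_large K_nonneg real_t_ge_1 by argo
  moreover have "(1 - eps / 2) * \<Delta> = \<Delta> - eps * \<Delta> / 2" "eps / 8 * \<Delta> = eps * \<Delta> / 8"
    by (simp_all add: algebra_simps)
  ultimately show ?thesis unfolding rich_def by argo
qed

lemma card_rich_neighbours_gt:
  assumes "p \<in> Y_near"
  shows "K < real (card {w \<in> N p. rich w})"
proof -
  obtain x r where "p \<in> Y" "x \<in> N p" "r \<in> N x" "r \<in> N x0"
    using assms unfolding Y_near_def by blast
  have "p \<in> V" using \<open>p \<in> Y\<close> Y_subset by blast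
  have "x \<in> X" using N_Y \<open>p \<in> Y\<close> \<open>x \<in> N p\<close> by blast
  have "r \<in> Y" using N_X \<open>x \<in> X\<close> \<open>r \<in> N x\<close> by blast
  have "p \<in> N x" using N_sym \<open>p \<in> V\<close> \<open>x \<in> N p\<close> by blast
  have "E x r" "E x0 r" "E x p" using \<open>r \<in> N x\<close> \<open>r \<in> N x0\<close> \<open>p \<in> N x\<close> by (auto simp: mem_N)
  obtain w where w: "w \<in> N r" "almost_covers w x0 r" "almost_covers w x r"
    using exists_almost_covers_both[OF x0(1) \<open>x \<in> X\<close> \<open>r \<in> Y\<close> \<open>E x0 r\<close> \<open>E x r\<close>] by blast
  have "w \<in> X" using w(1) N_Y \<open>r \<in> Y\<close> by blast
  define Ap where "Ap = {a \<in> N p - {x}. almost_covers a x p}"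
  have card_Ap: "real (card (N p)) - 1 - K \<le> real (card Ap)"
    unfolding Ap_def using card_almost_covers_Diff_ge[OF \<open>x \<in> X\<close> \<open>p \<in> Y\<close> \<open>E x p\<close>] by blast
  have card_Np: "64 * (real t + K + 2) \<le> real (card (N p))" using card_N_large(2)[OF \<open>p \<in> V\<close>] .
  have "Ap \<subseteq> V" using N_subset unfolding Ap_def by blast
  have "Ap \<noteq> {}" by (rule nonempty_if_card_gt[of 0]) (use card_Ap card_Np K_nonneg real_t_ge_1 in argo, simp)
  moreover have "almost_covers a x p" if "a \<in> Ap" for a using that unfolding Ap_def by blast
  ultimately obtain b where b: "b \<in> N x \<inter> N w - {p}" "real (card Ap) / 2 \<le> real (card (N b \<inter> Ap))"
    using exists_neighbour_seeing_half[OF \<open>x \<in> X\<close> \<open>p \<in> N x\<close> \<open>r \<in> N x\<close> \<open>Ap \<subseteq> V\<close>] w(3) by blast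
  then have "b \<in> Y" "E w b" using N_X[OF \<open>x \<in> X\<close>] by (auto simp: mem_N)
  define A2 where "A2 = {a \<in> N b \<inter> Ap - {w}. almost_covers a w b}"
  have "real (card (N b \<inter> Ap)) - 1 - K \<le> real (card A2)"
    unfolding A2_def by (rule card_almost_covers_Diff_ge[OF \<open>w \<in> X\<close> \<open>b \<in> Y\<close> \<open>E w b\<close>]) blast
  then have "K < real (card A2)" using b(2) card_Ap card_Np K_nonneg real_t_ge_1 by argo
  moreover have "A2 \<subseteq> {w \<in> N p. rich w}"
    using rich_if_almost_covers_twice[OF \<open>w \<in> X\<close> w(2)] unfolding A2_def Ap_def by blast
  then have "card A2 \<le> card {w \<in> N p. rich w}" using finite_N by (intro card_mono) auto
  ultimately show ?thesis by linarith
qed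

lemma exists_rich_almost_covers:
  assumes "p \<in> Y_near" "x \<in> X" "p \<in> N x" "N x \<inter> N x0 = {}"
  shows "\<exists>w\<in>N p. rich w \<and> almost_covers w x p"
proof -
  have "p \<in> Y" using assms(1) unfolding Y_near_def by blast
  have "E x p" using assms(3) by (simp add: mem_N)
  have "\<not> rich x" using rich_card_Int_ge[of x] assms(4) by auto
  then have "real (card {w \<in> N p. rich w}) - K
      \<le> real (card {w \<in> {w \<in> N p. rich w}. almost_covers w x p})"
    by (intro card_almost_covers_ge[OF assms(2) \<open>p \<in> Y\<close> \<open>E x p\<close>]) auto
  then have "{w \<in> {w \<in> N p. rich w}. almost_covers w x p} \<noteq> {}"
    using card_rich_neighbours_gt[OF assms(1)] by (intro nonempty_if_card_gt[of 0]) auto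
  then show ?thesis by blast
qed

lemma Y_near_step:
  assumes "y \<in> Y" "x \<in> N y" "p \<in> Y_near" "p \<in> N x"
  shows "y \<in> Y_near"
proof (rule ccontr)
  assume "y \<notin> Y_near"
  then have far: "N a \<inter> N x0 = {}" if "a \<in> N y" for a using that assms(1) unfolding Y_near_def by blast
  have "x \<in> X" using N_Y assms(1,2) by blast
  have "y \<in> V" using assms(1) Y_subset by blast
  have "y \<in> N x" using N_sym \<open>y \<in> V\<close> assms(2) by blast
  have "E x y" using \<open>y \<in> N x\<close> by (simp add: mem_N)
  obtain w where "w \<in> N p" "rich w" "almost_covers w x p"
    using exists_rich_almost_covers[OF assms(3) \<open>x \<in> X\<close> assms(4) far[OF assms(2)]] by blast
  have "w \<in> X" using N_Y \<open>w \<in> N p\<close> assms(3) unfolding Y_near_def by blast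
  have rich_Int: "real t + 1 \<le> real (card (N w \<inter> N x0))" using rich_card_Int_ge[OF \<open>rich w\<close>] .
  define Ay where "Ay = {a \<in> N y - {x}. almost_covers a x y}"
  have card_Ay: "real (card (N y)) - 1 - K \<le> real (card Ay)"
    unfolding Ay_def using card_almost_covers_Diff_ge[OF \<open>x \<in> X\<close> assms(1) \<open>E x y\<close>] by blast
  have card_Ny: "64 * (real t + K + 2) \<le> real (card (N y))" using card_N_large(2)[OF \<open>y \<in> V\<close>] .
  have "Ay \<subseteq> V" using N_subset unfolding Ay_def by blast
  have "Ay \<noteq> {}" by (rule nonempty_if_card_gt[of 0]) (use card_Ay card_Ny K_nonneg real_t_ge_1 in argo, simp)
  moreover have "almost_covers a x y" if "a \<in> Ay" for a using that unfolding Ay_def by blast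
  ultimately obtain b where b: "b \<in> N x \<inter> N w - {y}" "real (card Ay) / 2 \<le> real (card (N b \<inter> Ay))"
    using exists_neighbour_seeing_half[OF \<open>x \<in> X\<close> \<open>y \<in> N x\<close> \<open>p \<in> N x\<close> \<open>Ay \<subseteq> V\<close>]
      \<open>almost_covers w x p\<close> by blast
  then have "b \<in> Y" "E w b" using N_X[OF \<open>x \<in> X\<close>] by (auto simp: mem_N)
  have "w \<notin> Ay" using rich_Int far unfolding Ay_def by fastforce
  then have "N b \<inter> Ay \<subseteq> N b - {w}" by blast
  moreover have "real t \<le> real (card (N b \<inter> Ay))" using b(2) card_Ay card_Ny K_nonneg real_t_ge_1 by argo
  then have "t \<le> card (N b \<inter> Ay)" by simp
  moreover have "N w \<inter> N x0 - {b} \<subseteq> N w - {b}" by blast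
  moreover have "t \<le> card (N w \<inter> N x0 - {b})"
    using rich_Int card_Diff_ge[of "{b}" "N w \<inter> N x0"] by simp
  ultimately obtain a c where "a \<in> N b \<inter> Ay" "c \<in> N w \<inter> N x0 - {b}" "E a c"
    using no_hole[OF \<open>w \<in> X\<close> \<open>b \<in> Y\<close> \<open>E w b\<close>] by blast
  then have "c \<in> N a \<inter> N x0" "a \<in> N y" using N_subset unfolding Ay_def by (auto simp: mem_N)
  then show False using far by blast
qed

lemma Y_near_eq: "Y_near = Y"
proof
  show "Y_near \<subseteq> Y" unfolding Y_near_def by blast
next
  define S where "S = Y_near \<union> {x \<in> X. N x \<inter> Y_near \<noteq> {}}"
  have "N x0 \<subseteq> Y_near"
  proof
    fix r assume "r \<in> N x0"
    moreover have "x0 \<in> N r" using N_sym x0(1) X_subset \<open>r \<in> N x0\<close> by blast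
    ultimately show "r \<in> Y_near" using N_X x0(1) unfolding Y_near_def by blast
  qed
  moreover have "N x0 \<noteq> {}"
    using card_N_large(2)[of x0] x0(1) X_subset K_nonneg real_t_ge_1 by (intro nonempty_if_card_gt[of 0]) auto
  ultimately have "x0 \<in> S" unfolding S_def using x0(1) by blast
  have "v \<in> S" if "(\<lambda>a b. a \<in> V \<and> b \<in> V \<and> E a b)\<^sup>*\<^sup>* x0 v" for v
    using that
  proof (induction rule: rtranclp_induct)
    case (step u v)
    then have "v \<in> N u" "u \<in> N v" by (auto simp: mem_N E_sym)
    show ?case
    proof (cases "u \<in> Y_near")
      case True
      then have "v \<in> X" using N_Y \<open>v \<in> N u\<close> unfolding Y_near_def by blast
      then show ?thesis using True \<open>u \<in> N v\<close> unfolding S_def by blast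
    next
      case False
      then obtain p where "u \<in> X" "p \<in> N u" "p \<in> Y_near" using step.IH unfolding S_def by blast
      then have "v \<in> Y" using N_X \<open>v \<in> N u\<close> by blast
      then show ?thesis using Y_near_step[OF _ \<open>u \<in> N v\<close> \<open>p \<in> Y_near\<close> \<open>p \<in> N u\<close>] unfolding S_def by blast
    qed
  qed (use \<open>x0 \<in> S\<close> in simp)
  then have "Y \<subseteq> S"
    using connected x0(1) X_subset Y_subset unfolding connected_graph_def by blast
  then show "Y \<subseteq> Y_near" using X_Y_disjoint unfolding S_def by blast
qed

lemma card_low_neighbours_le:
  assumes "y \<in> Y"
  shows "real (card (N y \<inter> low_set V E X eps)) \<le> K"
proof -
  have "{w \<in> N y. rich w} \<noteq> {}"
    using card_rich_neighbours_gt[of y] Y_near_eq assms K_nonneg by (intro nonempty_if_card_gt[of 0]) auto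
  then obtain w where "w \<in> N y" "rich w" by blast
  have "w \<in> X" "y \<in> V" using N_Y assms \<open>w \<in> N y\<close> Y_subset by auto
  then have "y \<in> N w" "E w y" using N_sym \<open>w \<in> N y\<close> by (auto simp: mem_N)
  have deg_w: "(1 - eps / 2) * \<Delta> \<le> real (card (N w))"
    using \<open>rich w\<close> card_mono[OF finite_N, of "N w \<inter> N x0" w] unfolding rich_def by force
  have "N y \<inter> low_set V E X eps \<subseteq> {u \<in> N y - {w}. \<not> almost_covers u w y}"
  proof
    fix u assume u: "u \<in> N y \<inter> low_set V E X eps"
    then have deg_u: "real (card (N u)) \<le> (1 - eps) * \<Delta>"
      unfolding low_set_def degree_eq_card_N by blast
    have "y \<in> N u" using N_sym \<open>y \<in> V\<close> u by blast
    have "eps * \<Delta> > 0" using \<Delta>_large K_nonneg real_t_ge_1 by argo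
    then have "u \<noteq> w" using deg_u deg_w by (auto simp: algebra_simps)
    have "card (N w - {y}) \<le> max_degree_in V E X"
      using card_N_le_max_degree[OF \<open>w \<in> X\<close>] card_mono[OF finite_N, of "N w - {y}" w] by force
    then have "eps / 8 * card (N w - {y}) \<le> eps / 8 * \<Delta>" using eps by (intro mult_left_mono) auto
    moreover have "(1 - eps / 2) * \<Delta> - (1 - eps) * \<Delta> = eps / 2 * \<Delta>" by (simp add: algebra_simps)
    moreover have "eps / 8 * \<Delta> \<le> eps / 2 * \<Delta>" using \<open>eps * \<Delta> > 0\<close> by simp
    ultimately have "\<not> almost_covers u w y"
      using card_N_Diff_ge[OF \<open>y \<in> N w\<close> \<open>y \<in> N u\<close>] deg_u deg_w unfolding almost_covers_def by argo
    then show "u \<in> {u \<in> N y - {w}. \<not> almost_covers u w y}" using u \<open>u \<noteq> w\<close> by blast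
  qed
  then have "card (N y \<inter> low_set V E X eps) \<le> card {u \<in> N y - {w}. \<not> almost_covers u w y}"
    using finite_N by (intro card_mono) auto
  then show ?thesis using card_not_almost_covers_le[OF \<open>w \<in> X\<close> assms \<open>E w y\<close>] by linarith
qed

end

context biclaw_free_bipartite
begin

lemma few_low_neighbours:
  assumes "y \<in> Y"
  shows "real (card (N y \<inter> low_set V E X eps)) \<le> K"
proof -
  have "max_degree_in V E X \<in> degree V E ` X"
    unfolding max_degree_in_def using X_nonempty finite_subset[OF X_subset finite_V] by simp
  then obtain x0 where "x0 \<in> X" "card (N x0) = max_degree_in V E X"
    by (auto simp: degree_eq_card_N)
  then interpret biclaw_free_bipartite_max V E X Y t eps x0
    by unfold_locales
  show ?thesis by (rule card_low_neighbours_le[OF assms])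
qed

lemma low_set_expands:
  assumes "S \<subseteq> low_set V E X eps"
  shows "2 * card S \<le> card (\<Union>u\<in>S. N u \<inter> (Y - low_set V E Y eps))"
proof (rule ccontr)
  let ?H = "Y - low_set V E Y eps"
  define T where "T = (\<Union>u\<in>S. N u \<inter> ?H)"
  assume "\<not> 2 * card S \<le> card T"
  then have "real (card T) * K \<le> 2 * real (card S) * K" "0 < card S"
    using K_nonneg by (auto intro: mult_right_mono)
  have "S \<subseteq> X" using assms unfolding low_set_def by blast
  then have "S \<subseteq> V" "finite S" using X_subset finite_subset[OF _ finite_V] by auto
  have "T \<subseteq> V" "finite T" unfolding T_def using N_subset finite_N \<open>finite S\<close> by auto
  have many: "64 * (real t + K + 2) - K \<le> real (card (N u \<inter> T))" if "u \<in> S" for u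
  proof -
    have "card (N u) \<le> card (N u \<inter> T) + card (N u \<inter> low_set V E Y eps)"
      using N_X \<open>S \<subseteq> X\<close> that finite_N unfolding T_def by (intro card_le_card_Un) auto
    moreover have "real (card (N u \<inter> low_set V E Y eps)) \<le> K"
      using biclaw_free_bipartite.few_low_neighbours[OF swap] \<open>S \<subseteq> X\<close> that by blast
    ultimately show ?thesis using card_N_large(2) \<open>S \<subseteq> V\<close> that by force
  qed
  have few: "real (card (N y \<inter> S)) \<le> K" if "y \<in> T" for y
  proof -
    have "card (N y \<inter> S) \<le> card (N y \<inter> low_set V E X eps)"
      using assms finite_N by (intro card_mono) auto
    moreover have "y \<in> Y" using that unfolding T_def by blast
    ultimately show ?thesis using few_low_neighbours by force
  qed
  have "real (card S) * (64 * (real t + K + 2) - K) \<le> (\<Sum>u\<in>S. real (card (N u \<inter> T)))"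
    using sum_mono[OF many] by simp
  also have "\<dots> = (\<Sum>y\<in>T. real (card (N y \<inter> S)))"
    using sum_card_N_Int_swap[OF \<open>S \<subseteq> V\<close> \<open>T \<subseteq> V\<close> \<open>finite S\<close> \<open>finite T\<close>]
    by (metis (mono_tags, lifting) of_nat_sum sum.cong)
  also have "\<dots> \<le> real (card T) * K"
    using few by (intro sum_bounded_above) auto
  finally have "real (card S) * (64 * (real t + K + 2) - K) \<le> 2 * real (card S) * K"
    using \<open>real (card T) * K \<le> 2 * real (card S) * K\<close> by linarith
  moreover have "real (card S) * (2 * K) < real (card S) * (64 * (real t + K + 2) - K)"
    using \<open>0 < card S\<close> K_nonneg real_t_ge_1 by (intro mult_strict_left_mono) auto
  ultimately show False by linarith
qed

lemma low_set_two_matching: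
  "\<exists>vm vp. (\<forall>u\<in>low_set V E X eps.
       vm u \<in> Y - low_set V E Y eps \<and> vp u \<in> Y - low_set V E Y eps \<and> E u (vm u) \<and> E u (vp u)) \<and>
     inj_on vm (low_set V E X eps) \<and> inj_on vp (low_set V E X eps) \<and>
     vm ` low_set V E X eps \<inter> vp ` low_set V E X eps = {}"
proof -
  have "low_set V E X eps \<subseteq> V" using X_subset unfolding low_set_def by blast
  then have "finite (low_set V E X eps)" using finite_V by (rule finite_subset)
  from two_disjoint_representatives[OF this low_set_expands]
  obtain f g where fg: "\<forall>u\<in>low_set V E X eps. f u \<in> N u \<inter> (Y - low_set V E Y eps) \<and> g u \<in> N u \<inter> (Y - low_set V E Y eps)"
    "inj_on f (low_set V E X eps)" "inj_on g (low_set V E X eps)"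
    "f ` low_set V E X eps \<inter> g ` low_set V E X eps = {}"
    by blast
  have "\<forall>u\<in>low_set V E X eps. f u \<in> Y - low_set V E Y eps \<and> g u \<in> Y - low_set V E Y eps \<and> E u (f u) \<and> E u (g u)"
    using fg(1) by (simp add: mem_N)
  with fg(2-4) show ?thesis by (intro exI[of _ f] exI[of _ g] conjI)
qed

end

lemma biclaw_free_bipartiteI:
  assumes "1 \<le> t" "0 < eps" "eps < 1" "simple_graph V E" "connected_graph V E" "bipartition V E X Y"
    "induced_biclaw_free V E t"
    "3 * (64 * (real t + bad_neighbour_bound t eps + 2) / eps) \<le> real (min_degree V E)"
  shows "biclaw_free_bipartite V E X Y t eps"
proof
  let ?C = "64 * (real t + bad_neighbour_bound t eps + 2) / eps"
  have "0 \<le> ?C" using assms(2) unfolding bad_neighbour_bound_def by simp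
  then have "?C \<le> real (min_degree V E)" using assms(8) by linarith
  then have "eps * ?C \<le> eps * real (min_degree V E)" using assms(2) by (intro mult_left_mono) auto
  then show "64 * (real t + bad_neighbour_bound t eps + 2) \<le> eps * real (min_degree V E)"
    using assms(2) by simp
qed (use assms in auto)

lemma low_sets_two_matchings:
  assumes "biclaw_free_bipartite V E X Y t eps"
  shows "(\<exists>vm vp. (\<forall>u\<in>low_set V E X eps.
             vm u \<in> Y - low_set V E Y eps \<and> vp u \<in> Y - low_set V E Y eps \<and>
             E u (vm u) \<and> E u (vp u)) \<and>
          inj_on vm (low_set V E X eps) \<and> inj_on vp (low_set V E X eps) \<and>
          vm ` low_set V E X eps \<inter> vp ` low_set V E X eps = {}) \<and>
       (\<exists>um up. (\<forall>v\<in>low_set V E Y eps.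
             um v \<in> X - low_set V E X eps \<and> up v \<in> X - low_set V E X eps \<and>
             E v (um v) \<and> E v (up v)) \<and>
          inj_on um (low_set V E Y eps) \<and> inj_on up (low_set V E Y eps) \<and>
          um ` low_set V E Y eps \<inter> up ` low_set V E Y eps = {})"
  using biclaw_free_bipartite.low_set_two_matching[OF assms]
    biclaw_free_bipartite.low_set_two_matching[OF biclaw_free_bipartite.swap[OF assms]]
  by (rule conjI)

theorem mainTheorem15:
  shows "\<exists>C :: nat \<Rightarrow> real \<Rightarrow> real. \<forall>t eps. t \<ge> 1 \<longrightarrow> 0 < eps \<longrightarrow> eps < 1 \<longrightarrow>
    (\<forall>(V :: nat set) E X Y n.
       simple_graph V E \<and> connected_graph V E \<and> bipartition V E X Y \<and>
       card X = n \<and> card Y = n \<and>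
       real (min_degree V E) \<ge> 3 * C t eps \<and> induced_biclaw_free V E t \<longrightarrow>
       (\<exists>vm vp. (\<forall>u\<in>low_set V E X eps.
             vm u \<in> Y - low_set V E Y eps \<and> vp u \<in> Y - low_set V E Y eps \<and>
             E u (vm u) \<and> E u (vp u)) \<and>
          inj_on vm (low_set V E X eps) \<and> inj_on vp (low_set V E X eps) \<and>
          vm ` low_set V E X eps \<inter> vp ` low_set V E X eps = {}) \<and>
       (\<exists>um up. (\<forall>v\<in>low_set V E Y eps.
             um v \<in> X - low_set V E X eps \<and> up v \<in> X - low_set V E X eps \<and>
             E v (um v) \<and> E v (up v)) \<and>
          inj_on um (low_set V E Y eps) \<and> inj_on up (low_set V E Y eps) \<and>
          um ` low_set V E Y eps \<inter> up ` low_set V E Y eps = {}))"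
  by (intro exI[of _ "\<lambda>t eps. 64 * (real t + bad_neighbour_bound t eps + 2) / eps"] allI impI
      low_sets_two_matchings biclaw_free_bipartiteI) auto

end
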